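(* Let $\mathcal{K}$ be the convex set of real symmetric positive semi-definite $N\times N$ matrices $W$ with $\operatorname{Tr}W=N$, let $\mathbb{G}=\{G \text{ real symmetric } N\times N: G_{\mu\mu}=1,\ \mu=1,\ldots,N\}$, and let $\mathcal{G}=\mathbb{G}\cap\mathcal{K}$. For a closed face $\mathcal{F}$ of $\mathcal{G}$ let $\overline{\mathcal F}$ be the intersection of all faces of $\mathcal{K}$ containing $\mathcal F$. Then $\overline{\mathcal F}\cap\mathbb{G}=\mathcal{F}$ for every closed face $\mathcal{F}$ of $\mathcal{G}$.
   Context: A face of a convex set $C$ is a convex subset $F\subseteq C$ such that whenever $x\in F$, $y,z\in C$, $0<\alpha<1$ and $x=\alpha y+(1-\alpha)z$, then $y,z\in F$. *)

theory Defs
  imports "HOL-Analysis.Analysis"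
begin

definition psd_matrix :: "real^'n^'n \<Rightarrow> bool" where
  "psd_matrix W \<longleftrightarrow> (\<forall>x::real^'n. 0 \<le> x \<bullet> (W *v x))"

definition Kset :: "(real^'n^'n) set" where
  "Kset = {W. transpose W = W \<and> psd_matrix W \<and> trace W = real CARD('n)}"

definition GGset :: "(real^'n^'n) set" where
  "GGset = {G. transpose G = G \<and> (\<forall>\<mu>. G $ \<mu> $ \<mu> = 1)}"

definition Gset :: "(real^'n^'n) set" where
  "Gset = GGset \<inter> Kset"

definition face_closure_K :: "(real^'n^'n) set \<Rightarrow> (real^'n^'n) set" where
  "face_closure_K F = \<Inter>{E. E face_of Kset \<and> F \<subseteq> E}"

end

theory Submission
  imports Defs
begin

text \<open>
  Let \<open>E\<close> be the smallest face of \<open>K\<close> containing \<open>F\<close>. A relative interior point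
  \<open>x\<close> of \<open>F\<close> lies in the relative interior of \<open>E\<close>: otherwise a supporting hyperplane
  of \<open>E\<close> at \<open>x\<close> would cut out a proper face of \<open>E\<close> that still contains \<open>F\<close>.
  Since the set \<open>GG\<close> of unit-diagonal symmetric matrices is affine, \<open>x\<close> is then a
  relative interior point of \<open>E \<inter> GG\<close>, a convex subset of \<open>G = GG \<inter> K\<close>; and a face of
  \<open>G\<close> meeting the relative interior of such a subset contains all of it. So
  \<open>E \<inter> GG \<subseteq> F\<close>, and the converse inclusion is clear.
\<close>

definition smallest_face :: "'a::real_vector set \<Rightarrow> 'a set \<Rightarrow> 'a set" where
  "smallest_face S T = \<Inter>{E. E face_of S \<and> T \<subseteq> E}"

lemma smallest_face_face_of:
  assumes "convex S" "T \<subseteq> S"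
  shows "smallest_face S T face_of S"
  unfolding smallest_face_def
  using assms face_of_refl by (intro face_of_Inter) auto

lemma subset_smallest_face: "T \<subseteq> smallest_face S T"
  unfolding smallest_face_def by blast

lemma smallest_face_minimal: "E face_of S \<Longrightarrow> T \<subseteq> E \<Longrightarrow> smallest_face S T \<subseteq> E"
  unfolding smallest_face_def by blast

lemma smallest_face_empty [simp]: "smallest_face S {} = {}"
  using smallest_face_minimal[OF empty_face_of] by blast

lemma rel_interior_subset_rel_interior_smallest_face:
  fixes S T :: "'a::euclidean_space set"
  assumes "convex S" "T \<subseteq> S"
  shows "rel_interior T \<subseteq> rel_interior (smallest_face S T)"
proof
  fix x
  assume xT: "x \<in> rel_interior T"
  define E where "E = smallest_face S T"
  have ES: "E face_of S" and TE: "T \<subseteq> E"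
    unfolding E_def using assms by (rule smallest_face_face_of) (rule subset_smallest_face)
  have convE: "convex E" using ES face_of_imp_convex by blast
  have xE: "x \<in> E" using xT TE rel_interior_subset by blast
  show "x \<in> rel_interior (smallest_face S T)"
  proof (rule ccontr)
    assume "x \<notin> rel_interior (smallest_face S T)"
    then obtain a where a_le: "\<And>y. y \<in> E \<Longrightarrow> a \<bullet> x \<le> a \<bullet> y"
      and a_less: "\<And>y. y \<in> rel_interior E \<Longrightarrow> a \<bullet> x < a \<bullet> y"
      using supporting_hyperplane_rel_boundary[OF convE xE] unfolding E_def by metis
    define E' where "E' = E \<inter> {y. a \<bullet> y = a \<bullet> x}"
    have E'E: "E' face_of E"
      unfolding E'_def using convE a_le by (intro face_of_Int_supporting_hyperplane_ge) auto
    have "E' \<inter> rel_interior T \<noteq> {}"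
      using xT xE unfolding E'_def by blast
    then have "T \<subseteq> E'"
      using subset_of_face_of[OF E'E TE] by blast
    then have "E \<subseteq> E'"
      unfolding E_def by (rule smallest_face_minimal[OF face_of_trans[OF E'E ES]])
    moreover obtain w where w: "w \<in> rel_interior E"
      using convE xE rel_interior_eq_empty by blast
    ultimately have "a \<bullet> w = a \<bullet> x"
      unfolding E'_def using rel_interior_subset by blast
    with a_less[OF w] show False by simp
  qed
qed

lemma face_of_Int_affine_subset:
  fixes A L :: "'a::euclidean_space set"
  assumes F: "F face_of A \<inter> L" and L: "affine L" and E: "E face_of A"
    and x: "x \<in> F" "x \<in> rel_interior E"
  shows "E \<inter> L \<subseteq> F"
proof -
  have convE: "convex E" using E face_of_imp_convex by blast
  have "x \<in> L" using F x(1) face_of_imp_subset by blast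
  then have "rel_interior E \<inter> rel_interior L \<noteq> {}"
    using x(2) rel_interior_affine[OF L] by blast
  then have "rel_interior (E \<inter> L) = rel_interior E \<inter> L"
    using convex_rel_interior_inter_two[OF convE affine_imp_convex[OF L]]
      rel_interior_affine[OF L] by simp
  with x \<open>x \<in> L\<close> have "F \<inter> rel_interior (E \<inter> L) \<noteq> {}" by blast
  moreover have "E \<inter> L \<subseteq> A \<inter> L" using E face_of_imp_subset by blast
  ultimately show ?thesis using subset_of_face_of[OF F] by blast
qed

theorem smallest_face_Int_affine:
  fixes A L :: "'a::euclidean_space set"
  assumes F: "F face_of A \<inter> L" and A: "convex A" and L: "affine L"
  shows "smallest_face A F \<inter> L = F"
proof (cases "F = {}")
  case False
  have FAL: "F \<subseteq> A \<inter> L" using F face_of_imp_subset by blast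
  obtain x where x: "x \<in> rel_interior F"
    using False F face_of_imp_convex rel_interior_eq_empty by blast
  have "smallest_face A F \<inter> L \<subseteq> F"
  proof (rule face_of_Int_affine_subset[OF F L _ rel_interior_subset[THEN subsetD, OF x]])
    show "smallest_face A F face_of A" using A FAL smallest_face_face_of by blast
    show "x \<in> rel_interior (smallest_face A F)"
      using rel_interior_subset_rel_interior_smallest_face[OF A] FAL x by blast
  qed
  then show ?thesis using FAL subset_smallest_face by blast
qed simp

lemma convex_Kset: "convex Kset"
proof (rule convexI)
  fix A B :: "real^'n^'n" and u v :: real
  assume "A \<in> Kset" "B \<in> Kset" "0 \<le> u" "0 \<le> v" "u + v = 1"
  then have psd: "0 \<le> u * (x \<bullet> (A *v x)) + v * (x \<bullet> (B *v x))" for x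
    unfolding Kset_def psd_matrix_def by simp
  have "trace (u *\<^sub>R A + v *\<^sub>R B) = u * trace A + v * trace B"
    by (simp add: trace_def sum.distrib sum_distrib_left)
  moreover have "transpose (u *\<^sub>R A + v *\<^sub>R B) = u *\<^sub>R transpose A + v *\<^sub>R transpose B"
    by (simp add: transpose_def vec_eq_iff)
  moreover have "x \<bullet> ((u *\<^sub>R A + v *\<^sub>R B) *v x) = u * (x \<bullet> (A *v x)) + v * (x \<bullet> (B *v x))"
    for x :: "real^'n"
    by (simp add: matrix_vector_mult_add_rdistrib inner_add_right
        flip: scaleR_matrix_vector_assoc)
  ultimately show "u *\<^sub>R A + v *\<^sub>R B \<in> Kset"
    using \<open>A \<in> Kset\<close> \<open>B \<in> Kset\<close> \<open>u + v = 1\<close> psd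
    unfolding Kset_def psd_matrix_def by (simp flip: distrib_right)
qed

lemma affine_GGset: "affine GGset"
  unfolding affine_def GGset_def
  by (auto simp: transpose_def vec_eq_iff simp flip: distrib_right)

theorem lemma2:
  fixes F :: "(real^'n^'n) set"
  assumes "F face_of Gset" and "closed F"
  shows "face_closure_K F \<inter> GGset = F"
proof -
  have "F face_of Kset \<inter> GGset"
    using assms(1) unfolding Gset_def by (simp add: Int_commute)
  then show ?thesis
    using smallest_face_Int_affine convex_Kset affine_GGset
    unfolding face_closure_K_def smallest_face_def by blast
qed

end
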